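(* Suppose $(\eta,\omega_G)$, with $\eta(0)\in\operatorname{im}B^T$, is a solution of \[ \dot\eta=B_S^T\omega_G,\qquad M\dot\omega_G=-A\omega_G-B_G\Gamma\eta+u . \] Define $\eta_S=\Pi^T\eta$ with $\Pi=I-\Gamma B_L^T(B_L\Gamma B_L^T)^{-1}B_L$. Then $(\eta_S,\omega_G)$ is a solution of \[ \dot\eta_S=B_S^T\omega_G,\qquad M\dot\omega_G=-A\omega_G-B_S\Gamma\eta_S+u-\hat p, \] where $\hat p=B_G\Gamma B_L^T(B_L\Gamma B_L^T)^{-1}p^\ast$ and $p^\ast=B_L\Gamma\eta(t)$ (a constant vector, conserved along the solution).
   Context: A connected undirected graph with $n$ nodes and $m$ edges, nodes partitioned into $n_g$ generator and $n_\ell$ load nodes; $B$ is an incidence matrix partitioned row-wise as $B=\begin{bmatrix}B_G^T & B_L^T\end{bmatrix}^T$. $\Gamma=\mathrm{diag}(\gamma_k)$ is positive definite (constant), $M,A$ positive definite diagonal, $u\in\mathbb{R}^{n_g}$. Here $B_S$ is the constant projected incidence matrix $B_S=B_G\big(I-\Gamma B_L^T(B_L\Gamma B_L^T)^{-1}B_L\big)$. The first system is obtained from the nonlinear reduced model by neglecting the state dependence of $B_S$ and replacing $\sin(\eta)$ by $\eta$. *)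

theory Defs
  imports "HOL-Analysis.Analysis"
begin

text \<open>Nodes are of type 'g + 'l (generator nodes Inl, load nodes Inr); edges of type 'e.
  B :: real^'e^('g::finite+'l::finite) is the node-edge incidence matrix of an oriented graph.\<close>

definition incidence_matrix :: "real^'e^'v \<Rightarrow> bool" where
  "incidence_matrix B \<longleftrightarrow>
     (\<forall>e. \<exists>i j. i \<noteq> j \<and> B $ i $ e = 1 \<and> B $ j $ e = -1 \<and>
              (\<forall>k. k \<noteq> i \<and> k \<noteq> j \<longrightarrow> B $ k $ e = 0))"

definition graph_adj :: "real^'e^'v \<Rightarrow> ('v \<times> 'v) set" where
  "graph_adj B = {(i, j). i \<noteq> j \<and> (\<exists>e. B $ i $ e \<noteq> 0 \<and> B $ j $ e \<noteq> 0)}"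

definition graph_connected :: "real^'e^'v \<Rightarrow> bool" where
  "graph_connected B \<longleftrightarrow> (\<forall>i j. (i, j) \<in> (graph_adj B)\<^sup>*)"

definition pos_diag :: "real^'n^'n \<Rightarrow> bool" where
  "pos_diag D \<longleftrightarrow> (\<forall>i j. i \<noteq> j \<longrightarrow> D $ i $ j = 0) \<and> (\<forall>i. D $ i $ i > 0)"

definition BG :: "real^'e^('g::finite+'l::finite) \<Rightarrow> real^'e^'g" where
  "BG B = (\<chi> i j. B $ Inl i $ j)"

definition BL :: "real^'e^('g::finite+'l::finite) \<Rightarrow> real^'e^'l" where
  "BL B = (\<chi> i j. B $ Inr i $ j)"

definition Pi_mat :: "real^'e^('g::finite+'l::finite) \<Rightarrow> real^'e^'e \<Rightarrow> real^'e^'e" where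
  "Pi_mat B \<Gamma> = mat 1 - \<Gamma> ** transpose (BL B) ** matrix_inv (BL B ** \<Gamma> ** transpose (BL B)) ** BL B"

definition BS :: "real^'e^('g::finite+'l::finite) \<Rightarrow> real^'e^'e \<Rightarrow> real^'e^'g" where
  "BS B \<Gamma> = BG B ** Pi_mat B \<Gamma>"

definition p_hat :: "real^'e^('g::finite+'l::finite) \<Rightarrow> real^'e^'e \<Rightarrow> real^'l \<Rightarrow> real^'g" where
  "p_hat B \<Gamma> p = (BG B ** \<Gamma> ** transpose (BL B) ** matrix_inv (BL B ** \<Gamma> ** transpose (BL B))) *v p"

end

theory Submission
  imports Defs
begin

text \<open>Along any solution, \<open>B\<^sub>L\<Gamma>\<eta>\<close> is conserved, because \<open>B\<^sub>L\<Gamma>\<Pi>\<^sup>T = 0\<close> and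
  \<open>\<dot>\<eta> = \<Pi>\<^sup>T B\<^sub>G\<^sup>T \<omega>\<^sub>G\<close>; and since \<open>\<Pi>\<^sup>T\<close> is idempotent, \<open>\<eta>\<^sub>S = \<Pi>\<^sup>T\<eta>\<close> obeys the same
  equation as \<open>\<eta>\<close>. The remaining claim is the identity
  \<open>\<Gamma> = \<Pi>\<Gamma>\<Pi>\<^sup>T + \<Gamma>B\<^sub>L\<^sup>T K\<^sup>-\<^sup>1 B\<^sub>L\<Gamma>\<close> with \<open>K = B\<^sub>L\<Gamma>B\<^sub>L\<^sup>T\<close>: multiplied by \<open>B\<^sub>G\<close> on
  the left and by \<open>\<eta>\<close> on the right it splits \<open>B\<^sub>G\<Gamma>\<eta>\<close> into \<open>B\<^sub>S\<Gamma>\<eta>\<^sub>S\<close> plus the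
  constant \<open>p\<^sub>h\<^sub>a\<^sub>t\<close>. Invertibility of \<open>K\<close> uses that the graph is connected: the left
  null space of its incidence matrix consists of the constant vectors.\<close>

lemma matrix_diff_ldistrib: "(C::real^'n^'m) ** (A - B) = C ** A - C ** B"
  by (simp add: vec_eq_iff matrix_matrix_mult_def sum_subtractf algebra_simps)

lemma matrix_diff_rdistrib: "((A::real^'n^'m) - B) ** C = A ** C - B ** C"
  by (simp add: vec_eq_iff matrix_matrix_mult_def sum_subtractf algebra_simps)

lemma transpose_diff: "transpose ((A::real^'n^'m) - B) = transpose A - transpose B"
  by (simp add: vec_eq_iff transpose_def)

lemma matrix_inv_right:
  fixes A :: "real^'n::finite^'m::finite"
  assumes "invertible A"
  shows "A ** matrix_inv A = mat 1"
  using someI_ex[OF assms[unfolded invertible_def]] unfolding matrix_inv_def by blast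

lemma transpose_matrix_inv_symmetric:
  fixes A :: "real^'n::finite^'n"
  assumes "invertible A" and "transpose A = A"
  shows "transpose (matrix_inv A) = matrix_inv A"
proof -
  have "transpose (matrix_inv A) ** A = mat 1"
    by (metis assms matrix_inv_right matrix_transpose_mul transpose_mat)
  then show ?thesis
    by (metis assms(1) matrix_inv_right matrix_mul_assoc matrix_mul_lid matrix_mul_rid)
qed

lemma incidence_left_null_constant:
  fixes B :: "real^'e::finite^'v::finite" and y :: "real^'v"
  assumes inc: "incidence_matrix B" and conn: "graph_connected B" and null: "y v* B = 0"
  shows "y $ i = y $ j"
proof -
  have adj: "y $ a = y $ b" if "(a, b) \<in> graph_adj B" for a b
  proof -
    from that obtain e where ab: "a \<noteq> b" "B $ a $ e \<noteq> 0" "B $ b $ e \<noteq> 0"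
      unfolding graph_adj_def by auto
    from inc obtain p q where pq: "p \<noteq> q" "B $ p $ e = 1" "B $ q $ e = -1"
      "\<And>k. k \<noteq> p \<and> k \<noteq> q \<Longrightarrow> B $ k $ e = 0"
      unfolding incidence_matrix_def by blast
    have "(\<Sum>k\<in>UNIV. y $ k * B $ k $ e) = (\<Sum>k\<in>{p,q}. y $ k * B $ k $ e)"
      by (rule sum.mono_neutral_right) (use pq in auto)
    then have "y $ p = y $ q"
      using null pq by (simp add: vec_eq_iff vector_matrix_mult_def)
    moreover have "a = p \<or> a = q" "b = p \<or> b = q" using ab pq(4) by blast+
    ultimately show ?thesis by auto
  qed
  have "(i, j) \<in> (graph_adj B)\<^sup>*" using conn unfolding graph_connected_def by blast
  then show ?thesis
    by (induction rule: rtrancl_induct) (auto dest: adj)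
qed

lemma vector_matrix_mult_Plus:
  fixes B :: "real^'e^('g::finite + 'l::finite)"
  shows "y v* B = (\<chi> g. y $ Inl g) v* BG B + (\<chi> l. y $ Inr l) v* BL B"
  by (simp add: vec_eq_iff vector_matrix_mult_def BG_def BL_def
      sum.Plus[of UNIV UNIV, simplified] comp_def)

lemma pos_diag_symmetric: "pos_diag D \<Longrightarrow> transpose D = D"
  unfolding pos_diag_def transpose_def vec_eq_iff by (metis vec_lambda_beta)

lemma pos_diag_quadratic_form_eq_0:
  fixes D :: "real^'n::finite^'n"
  assumes D: "pos_diag D" and q: "inner z (D *v z) = 0"
  shows "z = 0"
proof -
  have "(D *v z) $ i = D $ i $ i * z $ i" for i
  proof -
    have "(\<Sum>j\<in>UNIV. D $ i $ j * z $ j) = (\<Sum>j\<in>{i}. D $ i $ j * z $ j)"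
      by (rule sum.mono_neutral_right) (use D in \<open>auto simp: pos_diag_def\<close>)
    then show ?thesis by (simp add: matrix_vector_mult_def)
  qed
  then have "(\<Sum>i\<in>UNIV. D $ i $ i * (z $ i)\<^sup>2) = 0"
    using q by (simp add: inner_vec_def power2_eq_square mult.commute mult.left_commute)
  then have "\<forall>i\<in>UNIV. D $ i $ i * (z $ i)\<^sup>2 = 0"
    by (subst (asm) sum_nonneg_eq_0_iff) (use D in \<open>auto simp: pos_diag_def less_imp_le\<close>)
  then show ?thesis
    using D by (simp add: vec_eq_iff pos_diag_def) (metis less_irrefl)
qed

lemma invertible_load_gram:
  fixes B :: "real^'e::finite^('g::finite + 'l::finite)" and \<Gamma> :: "real^'e^'e"
  assumes inc: "incidence_matrix B" and conn: "graph_connected B" and Gam: "pos_diag \<Gamma>"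
  shows "invertible (BL B ** \<Gamma> ** transpose (BL B))"
  unfolding invertible_left_inverse matrix_left_invertible_ker
proof (intro allI impI)
  fix x assume "(BL B ** \<Gamma> ** transpose (BL B)) *v x = 0"
  then have "inner (x v* BL B) (\<Gamma> *v (x v* BL B)) = 0"
    by (metis dot_lmul_matrix inner_zero_right matrix_vector_mul_assoc transpose_matrix_vector)
  then have xBL: "x v* BL B = 0" by (rule pos_diag_quadratic_form_eq_0[OF Gam])
  \<comment> \<open>\<open>x\<close> extended by zero on the generator nodes, which exist since types are nonempty\<close>
  define y :: "real^('g + 'l)" where "y = (\<chi> k. case k of Inl _ \<Rightarrow> 0 | Inr l \<Rightarrow> x $ l)"
  have "(\<chi> g. 0) = (0 :: real^'g)" by (simp add: vec_eq_iff)
  then have "y v* B = 0"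
    using xBL by (simp add: vector_matrix_mult_Plus y_def vector_matrix_mult_0)
  then have "y $ Inr l = y $ Inl g" for l g
    by (rule incidence_left_null_constant[OF inc conn])
  then show "x = 0" by (simp add: y_def vec_eq_iff)
qed

context
  fixes L :: "real^'n::finite^'m::finite" and G :: "real^'n^'n"
  assumes G_symmetric: "transpose G = G"
    and gram_invertible: "invertible (L ** G ** transpose L)"
begin

lemma transpose_oblique_projection:
  "transpose (mat 1 - G ** transpose L ** matrix_inv (L ** G ** transpose L) ** L)
     = mat 1 - transpose L ** matrix_inv (L ** G ** transpose L) ** L ** G"
proof -
  have "transpose (L ** G ** transpose L) = L ** G ** transpose L"
    by (simp add: matrix_transpose_mul G_symmetric matrix_mul_assoc)
  then show ?thesis
    by (simp add: transpose_diff matrix_transpose_mul G_symmetric matrix_mul_assoc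
        transpose_matrix_inv_symmetric[OF gram_invertible])
qed

lemma gram_mult_inv: "X ** L ** G ** transpose L ** matrix_inv (L ** G ** transpose L) = X"
  by (metis gram_invertible matrix_inv_right matrix_mul_assoc matrix_mul_rid)

lemma weighted_mult_transpose_oblique_projection:
  "L ** G ** transpose (mat 1 - G ** transpose L ** matrix_inv (L ** G ** transpose L) ** L) = 0"
  unfolding transpose_oblique_projection
  by (simp add: matrix_diff_ldistrib matrix_mul_assoc
      gram_mult_inv[of "mat 1", simplified matrix_mul_lid matrix_mul_assoc])

lemma transpose_oblique_projection_idempotent:
  "transpose (mat 1 - G ** transpose L ** matrix_inv (L ** G ** transpose L) ** L) **
   transpose (mat 1 - G ** transpose L ** matrix_inv (L ** G ** transpose L) ** L)
     = transpose (mat 1 - G ** transpose L ** matrix_inv (L ** G ** transpose L) ** L)"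
  unfolding transpose_oblique_projection
  by (simp add: matrix_diff_ldistrib matrix_diff_rdistrib matrix_mul_assoc gram_mult_inv)

lemma weight_oblique_decomposition:
  "G = (mat 1 - G ** transpose L ** matrix_inv (L ** G ** transpose L) ** L) ** G **
         transpose (mat 1 - G ** transpose L ** matrix_inv (L ** G ** transpose L) ** L)
       + G ** transpose L ** matrix_inv (L ** G ** transpose L) ** L ** G"
  unfolding transpose_oblique_projection
  by (simp add: matrix_diff_ldistrib matrix_diff_rdistrib matrix_mul_assoc gram_mult_inv)

end

context
  fixes B :: "real^'e::finite^('g::finite + 'l::finite)" and \<Gamma> :: "real^'e^'e"
  assumes Gamma_symmetric: "transpose \<Gamma> = \<Gamma>"
    and load_gram_invertible: "invertible (BL B ** \<Gamma> ** transpose (BL B))"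
begin

lemma transpose_BS: "transpose (BS B \<Gamma>) = transpose (Pi_mat B \<Gamma>) ** transpose (BG B)"
  by (simp add: BS_def matrix_transpose_mul)

lemma BL_Gamma_mult_transpose_BS: "BL B ** \<Gamma> ** transpose (BS B \<Gamma>) = 0"
proof -
  have "BL B ** \<Gamma> ** transpose (Pi_mat B \<Gamma>) = 0"
    unfolding Pi_mat_def
    by (rule weighted_mult_transpose_oblique_projection[OF Gamma_symmetric load_gram_invertible])
  then have "BL B ** \<Gamma> ** transpose (Pi_mat B \<Gamma>) ** transpose (BG B) = 0"
    by (simp add: vec_eq_iff matrix_matrix_mult_def)
  then show ?thesis
    by (simp add: transpose_BS matrix_mul_assoc)
qed

lemma transpose_Pi_mat_mult_transpose_BS:
  "transpose (Pi_mat B \<Gamma>) ** transpose (BS B \<Gamma>) = transpose (BS B \<Gamma>)"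
proof -
  have "transpose (Pi_mat B \<Gamma>) ** transpose (Pi_mat B \<Gamma>) = transpose (Pi_mat B \<Gamma>)"
    unfolding Pi_mat_def
    by (rule transpose_oblique_projection_idempotent[OF Gamma_symmetric load_gram_invertible])
  then show ?thesis
    by (metis transpose_BS matrix_mul_assoc)
qed

lemma BG_Gamma_split:
  "(BG B ** \<Gamma>) *v x = (BS B \<Gamma> ** \<Gamma>) *v (transpose (Pi_mat B \<Gamma>) *v x) + p_hat B \<Gamma> ((BL B ** \<Gamma>) *v x)"
proof -
  have "BG B ** \<Gamma> = BS B \<Gamma> ** \<Gamma> ** transpose (Pi_mat B \<Gamma>)
      + BG B ** \<Gamma> ** transpose (BL B) ** matrix_inv (BL B ** \<Gamma> ** transpose (BL B)) ** (BL B ** \<Gamma>)"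
    using arg_cong[OF weight_oblique_decomposition[OF Gamma_symmetric load_gram_invertible], of "(**) (BG B)"]
    by (simp add: matrix_add_ldistrib BS_def Pi_mat_def matrix_mul_assoc)
  then have "(BG B ** \<Gamma>) *v x = (BS B \<Gamma> ** \<Gamma> ** transpose (Pi_mat B \<Gamma>)) *v x
      + (BG B ** \<Gamma> ** transpose (BL B) ** matrix_inv (BL B ** \<Gamma> ** transpose (BL B)) ** (BL B ** \<Gamma>)) *v x"
    by (metis matrix_vector_mult_add_rdistrib)
  then show ?thesis
    by (simp add: p_hat_def matrix_vector_mul_assoc del: transpose_matrix_vector)
qed

end

lemma has_vector_derivative_matrix_vector_mult:
  fixes f :: "real \<Rightarrow> real^'n::finite" and C :: "real^'n^'m::finite"
  assumes "(f has_vector_derivative f') F"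
  shows "((\<lambda>t. C *v f t) has_vector_derivative C *v f') F"
  by (rule bounded_linear.has_vector_derivative[OF matrix_vector_mul_bounded_linear assms])

lemma matrix_image_conserved:
  fixes f :: "real \<Rightarrow> real^'n::finite" and C :: "real^'n^'m::finite"
  assumes "\<forall>t\<ge>0. (f has_vector_derivative f' t) (at t within {0..})"
    and "\<forall>t\<ge>0. C *v f' t = 0" and "t \<ge> 0"
  shows "C *v f t = C *v f 0"
proof (rule has_derivative_zero_unique[where s = "{0..}" and f = "\<lambda>t. C *v f t"])
  fix s :: real assume "s \<in> {0..}"
  then show "((\<lambda>t. C *v f t) has_derivative (\<lambda>h. 0)) (at s within {0..})"
    using assms(1,2) has_vector_derivative_matrix_vector_mult[of f "f' s" _ C]
    by (simp add: has_vector_derivative_def)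
qed (use assms(3) in auto)

theorem proposition4:
  fixes B :: "real^'e::finite^('g::finite + 'l::finite)"
    and \<Gamma> :: "real^'e^'e" and M A :: "real^'g^'g" and u :: "real^'g"
    and \<eta> :: "real \<Rightarrow> real^'e" and \<omega> :: "real \<Rightarrow> real^'g"
  assumes inc: "incidence_matrix B"
    and conn: "graph_connected B"
    and Gam: "pos_diag \<Gamma>" and Mpos: "pos_diag M" and Apos: "pos_diag A"
    and init: "\<eta> 0 \<in> range (\<lambda>x. transpose B *v x)"
    and eq1: "\<forall>t\<ge>0. (\<eta> has_vector_derivative (transpose (BS B \<Gamma>) *v \<omega> t)) (at t within {0..})"
    and eq2: "\<forall>t\<ge>0. \<exists>d. (\<omega> has_vector_derivative d) (at t within {0..}) \<and>
                 M *v d = - (A *v \<omega> t) - (BG B ** \<Gamma>) *v \<eta> t + u"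
  shows "let \<eta>S = (\<lambda>t. transpose (Pi_mat B \<Gamma>) *v \<eta> t);
             pstar = (BL B ** \<Gamma>) *v \<eta> 0
         in (\<forall>t\<ge>0. (BL B ** \<Gamma>) *v \<eta> t = pstar) \<and>
            (\<forall>t\<ge>0. (\<eta>S has_vector_derivative (transpose (BS B \<Gamma>) *v \<omega> t)) (at t within {0..})) \<and>
            (\<forall>t\<ge>0. \<exists>d. (\<omega> has_vector_derivative d) (at t within {0..}) \<and>
                 M *v d = - (A *v \<omega> t) - (BS B \<Gamma> ** \<Gamma>) *v \<eta>S t + u - p_hat B \<Gamma> pstar)"
proof -
  note Gsym = pos_diag_symmetric[OF Gam]
  note K = invertible_load_gram[OF inc conn Gam]
  have conserved: "(BL B ** \<Gamma>) *v \<eta> t = (BL B ** \<Gamma>) *v \<eta> 0" if "t \<ge> 0" for t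
  proof (rule matrix_image_conserved[OF eq1 _ that])
    show "\<forall>s\<ge>0. (BL B ** \<Gamma>) *v (transpose (BS B \<Gamma>) *v \<omega> s) = 0"
      by (simp add: matrix_vector_mul_assoc BL_Gamma_mult_transpose_BS[OF Gsym K]
          del: transpose_matrix_vector)
  qed
  show ?thesis
    unfolding Let_def
  proof (intro conjI allI impI)
    fix t :: real assume t: "t \<ge> 0"
    show "(BL B ** \<Gamma>) *v \<eta> t = (BL B ** \<Gamma>) *v \<eta> 0" by (rule conserved[OF t])
    show "((\<lambda>t. transpose (Pi_mat B \<Gamma>) *v \<eta> t) has_vector_derivative
        transpose (BS B \<Gamma>) *v \<omega> t) (at t within {0..})"
      using has_vector_derivative_matrix_vector_mult[OF eq1[rule_format, OF t],
          of "transpose (Pi_mat B \<Gamma>)"]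
      by (simp add: matrix_vector_mul_assoc transpose_Pi_mat_mult_transpose_BS[OF Gsym K]
          del: transpose_matrix_vector)
    obtain d where "(\<omega> has_vector_derivative d) (at t within {0..})"
      and "M *v d = - (A *v \<omega> t) - (BG B ** \<Gamma>) *v \<eta> t + u"
      using eq2 t by blast
    then show "\<exists>d. (\<omega> has_vector_derivative d) (at t within {0..}) \<and>
        M *v d = - (A *v \<omega> t) - (BS B \<Gamma> ** \<Gamma>) *v (transpose (Pi_mat B \<Gamma>) *v \<eta> t) + u
                 - p_hat B \<Gamma> ((BL B ** \<Gamma>) *v \<eta> 0)"
      unfolding BG_Gamma_split[OF Gsym K] conserved[OF t, symmetric]
      by (auto simp: algebra_simps)
  qed
qed

end
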